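(* Let $S,T\subseteq\mathbb{Z}_{>0}$ be finite and let $x\in T$ be such that $T_{\ge x+1}\preceq S_{>x+1}$ and $x+1\notin S$. Then $x\notin T\triangleleft S$.
   Context: For a finite set $S\subseteq\mathbb{Z}_{>0}$, $S(i)$ denotes its $i$th smallest element, $S_{>y}=\{s\in S:s>y\}$, $S_{\ge y}=\{s\in S:s\ge y\}$. $T\preceq S$ means $|T|\ge|S|$ and $T(i)<S(i)$ for all $i\in[|S|]$. For finite $S,T$, $T\triangleleft S$ is computed by going through $S$ from largest to smallest; each $s$ picks the largest element of $T$ less than $s$ not yet picked (if one exists); $T\triangleleft S$ is the set of picked elements. *)

theory Defs
  imports Main
begin

text \<open>S(i): the i-th smallest element (1-indexed) of a finite set of naturals.\<close>
definition elem_at :: "nat set \<Rightarrow> nat \<Rightarrow> nat" where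
  "elem_at S i = sorted_list_of_set S ! (i - 1)"

definition dominated :: "nat set \<Rightarrow> nat set \<Rightarrow> bool" where
  "dominated T S \<longleftrightarrow> card T \<ge> card S \<and> (\<forall>i\<in>{1..card S}. elem_at T i < elem_at S i)"

text \<open>Greedy picking: go through the list (S in decreasing order); each s picks the
  largest not-yet-picked element of T less than s, if one exists. The second argument is
  the set of not-yet-picked elements of T.\<close>
fun pick_aux :: "nat list \<Rightarrow> nat set \<Rightarrow> nat set" where
  "pick_aux [] R = {}"
| "pick_aux (s # ss) R =
     (if {t \<in> R. t < s} = {} then pick_aux ss R
      else (let m = Max {t \<in> R. t < s} in insert m (pick_aux ss (R - {m}))))"

definition tri :: "nat set \<Rightarrow> nat set \<Rightarrow> nat set" where
  "tri T S = pick_aux (rev (sorted_list_of_set S)) T"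

end

theory Submission
  imports Defs
begin

text \<open>
  The domination hypothesis gives a Hall-type counting condition: for every \<open>y\<close>,
  at most as many elements of \<open>S\<close> lie in \<open>(x+1, y]\<close> as elements of \<open>T\<close> lie in \<open>[x+1, y)\<close>.
  While the greedy picking runs through the elements \<open>s > x+1\<close> of \<open>S\<close> from the top, this
  condition is invariant: it guarantees an unpicked \<open>t \<in> [x+1, s)\<close>, so \<open>s\<close> picks some
  \<open>t \<ge> x+1\<close>, and removing that \<open>t\<close> preserves the condition for the remaining elements.
  As \<open>x+1 \<notin> S\<close>, every later element of \<open>S\<close> is at most \<open>x\<close> and can only pick elements
  below \<open>x\<close>. So \<open>x\<close> is never picked.
\<close>

lemma set_take_strict_sorted:
  fixes xs :: "'a::linorder list"
  assumes sorted: "sorted_wrt (<) xs" and j: "j < length xs"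
  shows "set (take j xs) = {a \<in> set xs. a < xs ! j}"
proof (intro equalityI subsetI)
  fix a assume "a \<in> set (take j xs)"
  then obtain i where "i < j" "a = xs ! i"
    using j by (auto simp: in_set_conv_nth)
  then show "a \<in> {a \<in> set xs. a < xs ! j}"
    using sorted j by (auto intro: sorted_wrt_nth_less)
next
  fix a assume "a \<in> {a \<in> set xs. a < xs ! j}"
  then obtain i where i: "i < length xs" "a = xs ! i" "xs ! i < xs ! j"
    by (auto simp: in_set_conv_nth)
  have "i < j"
  proof (rule ccontr)
    assume "\<not> i < j"
    then have "xs ! j \<le> xs ! i"
      using sorted i(1) by (metis le_less linorder_not_less sorted_wrt_nth_less)
    with i(3) show False by simp
  qed
  then show "a \<in> set (take j xs)"
    using i by (auto simp: in_set_conv_nth)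
qed

lemma elem_at_in:
  assumes "finite A" "1 \<le> i" "i \<le> card A"
  shows "elem_at A i \<in> A"
proof -
  have "i - 1 < length (sorted_list_of_set A)"
    using assms by simp
  then show ?thesis
    using assms(1) unfolding elem_at_def by (metis nth_mem set_sorted_list_of_set)
qed

lemma card_less_elem_at:
  assumes "finite A" "1 \<le> i" "i \<le> card A"
  shows "card {a \<in> A. a < elem_at A i} = i - 1"
proof -
  let ?xs = "sorted_list_of_set A"
  have "{a \<in> A. a < elem_at A i} = set (take (i - 1) ?xs)"
    using assms by (simp add: elem_at_def set_take_strict_sorted)
  then show ?thesis
    using assms by (simp add: distinct_card)
qed

lemma dominated_card_le:
  assumes "finite A" "finite B" "dominated B A"
  shows "card {a \<in> A. a \<le> y} \<le> card {b \<in> B. b < y}"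
proof (cases "card {a \<in> A. a \<le> y} = 0")
  case False
  define k where "k = card {a \<in> A. a \<le> y}"
  have "k \<le> card A"
    unfolding k_def using assms(1) by (intro card_mono) auto
  moreover have "1 \<le> k"
    using False unfolding k_def by linarith
  moreover have "card A \<le> card B"
    using assms(3) by (simp add: dominated_def)
  ultimately have k: "1 \<le> k" "k \<le> card A" "k \<le> card B"
    by simp_all
  have "elem_at A k \<le> y"
  proof (rule ccontr)
    assume "\<not> elem_at A k \<le> y"
    then have "{a \<in> A. a \<le> y} \<subseteq> {a \<in> A. a < elem_at A k}" by auto
    then have "k \<le> card {a \<in> A. a < elem_at A k}"
      unfolding k_def using assms(1) by (intro card_mono) auto
    also have "\<dots> = k - 1"
      using card_less_elem_at[OF assms(1) k(1,2)] .
    finally show False using k(1) by simp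
  qed
  moreover have "elem_at B k < elem_at A k"
    using assms(3) k by (simp add: dominated_def)
  ultimately have "insert (elem_at B k) {b \<in> B. b < elem_at B k} \<subseteq> {b \<in> B. b < y}"
    using elem_at_in[OF assms(2) k(1,3)] by auto
  then have "card (insert (elem_at B k) {b \<in> B. b < elem_at B k}) \<le> card {b \<in> B. b < y}"
    using assms(2) by (intro card_mono) auto
  moreover have "card (insert (elem_at B k) {b \<in> B. b < elem_at B k}) = k"
    using card_less_elem_at[OF assms(2) k(1,3)] assms(2) k(1) by simp
  ultimately show ?thesis
    unfolding k_def by simp
qed (metis le0)

definition hall_above :: "nat \<Rightarrow> nat set \<Rightarrow> nat set \<Rightarrow> bool" where
  "hall_above a S R \<longleftrightarrow> (\<forall>y. card {s \<in> S. a < s \<and> s \<le> y} \<le> card {t \<in> R. a \<le> t \<and> t < y})"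

lemma dominated_imp_hall_above:
  assumes "finite S" "finite T" "dominated {t \<in> T. a \<le> t} {s \<in> S. a < s}"
  shows "hall_above a S T"
  unfolding hall_above_def
proof
  fix y
  have "card {s' \<in> {s \<in> S. a < s}. s' \<le> y} \<le> card {t' \<in> {t \<in> T. a \<le> t}. t' < y}"
    using assms by (intro dominated_card_le) auto
  moreover have "{s' \<in> {s \<in> S. a < s}. s' \<le> y} = {s \<in> S. a < s \<and> s \<le> y}"
    and "{t' \<in> {t \<in> T. a \<le> t}. t' < y} = {t \<in> T. a \<le> t \<and> t < y}"
    by auto
  ultimately show "card {s \<in> S. a < s \<and> s \<le> y} \<le> card {t \<in> T. a \<le> t \<and> t < y}"
    by (simp only:)
qed

lemma
  fixes R :: "nat set"
  assumes "{t \<in> R. t < s} \<noteq> {}"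
  shows Max_less_in: "Max {t \<in> R. t < s} \<in> R"
    and Max_less_less: "Max {t \<in> R. t < s} < s"
    and Max_less_ge: "t \<in> R \<Longrightarrow> t < s \<Longrightarrow> t \<le> Max {t \<in> R. t < s}"
proof -
  have "finite {t \<in> R. t < s}"
    by (rule finite_subset[of _ "{..<s}"]) auto
  then show "Max {t \<in> R. t < s} \<in> R" "Max {t \<in> R. t < s} < s"
      "t \<in> R \<Longrightarrow> t < s \<Longrightarrow> t \<le> Max {t \<in> R. t < s}"
    using Max_in[OF _ assms] by auto
qed

lemma pick_aux_Cons_empty:
  assumes "{t \<in> R. t < s} = {}"
  shows "pick_aux (s # ss) R = pick_aux ss R"
  by (simp only: assms pick_aux.simps(2) simp_thms if_True)

lemma pick_aux_Cons_Max:
  assumes "{t \<in> R. t < s} \<noteq> {}"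
  shows "pick_aux (s # ss) R = insert (Max {t \<in> R. t < s}) (pick_aux ss (R - {Max {t \<in> R. t < s}}))"
  by (simp only: assms pick_aux.simps(2) if_False Let_def)

lemma pick_aux_less: "t \<in> pick_aux ss R \<Longrightarrow> \<exists>s \<in> set ss. t < s"
proof (induction ss arbitrary: R)
  case (Cons s ss)
  show ?case
  proof (cases "{t \<in> R. t < s} = {}")
    case True
    then show ?thesis
      using Cons.IH Cons.prems[unfolded pick_aux_Cons_empty[OF True]] by auto
  next
    case False
    then show ?thesis
      using Cons.IH Cons.prems[unfolded pick_aux_Cons_Max[OF False]] Max_less_less[OF False]
      by (metis insert_iff list.set_intros)
  qed
qed simp

lemma hall_above_Max_less_ge:
  assumes "finite S" "a < s" "hall_above a (insert s S) R"
  shows "{t \<in> R. t < s} \<noteq> {}" "a \<le> Max {t \<in> R. t < s}"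
proof -
  have "1 \<le> card {s' \<in> insert s S. a < s' \<and> s' \<le> s}"
    using assms(1,2) by (simp add: Suc_le_eq card_gt_0_iff) blast
  also have "\<dots> \<le> card {t \<in> R. a \<le> t \<and> t < s}"
    using assms(3) by (simp add: hall_above_def)
  finally obtain t where t: "t \<in> R" "a \<le> t" "t < s"
    by (metis (no_types, lifting) card.empty empty_Collect_eq not_one_le_zero)
  then show ne: "{t \<in> R. t < s} \<noteq> {}"
    by auto
  show "a \<le> Max {t \<in> R. t < s}"
    using Max_less_ge[OF ne t(1,3)] t(2) by linarith
qed

lemma hall_above_remove_Max:
  assumes "finite S" "\<forall>s' \<in> S. s' < s" "a < s" "hall_above a (insert s S) R"
  shows "hall_above a S (R - {Max {t \<in> R. t < s}})"
proof -
  let ?m = "Max {t \<in> R. t < s}"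
  define P where "P y = {s' \<in> S. a < s' \<and> s' \<le> y}" for y
  define Q where "Q y = {t \<in> R. a \<le> t \<and> t < y}" for y
  have ne: "{t \<in> R. t < s} \<noteq> {}" and "a \<le> ?m"
    using hall_above_Max_less_ge[OF assms(1,3,4)] by auto
  then have m: "?m \<in> Q s"
    using Max_less_in[OF ne] Max_less_less[OF ne] by (simp add: Q_def)
  have finite_Q: "finite (Q y)" for y
    by (rule finite_subset[of _ "{..<y}"]) (auto simp: Q_def)
  have hall: "card {s' \<in> insert s S. a < s' \<and> s' \<le> y} \<le> card (Q y)" for y
    using assms(4) by (simp add: hall_above_def Q_def)
  have P_less_Q: "card (P y) < card (Q y)" if "s \<le> y" for y
  proof -
    have "{s' \<in> insert s S. a < s' \<and> s' \<le> y} = insert s (P y)"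
      using that assms(3) by (auto simp: P_def)
    moreover have "s \<notin> P y" "finite (P y)"
      using assms(1,2) by (auto simp: P_def)
    ultimately show ?thesis
      using hall[of y] by simp
  qed
  have "card (P y) \<le> card (Q y - {?m})" for y
  proof (cases "s \<le> y")
    case True
    then show ?thesis
      using P_less_Q[OF True] by (auto simp: card_Diff_singleton_if)
  next
    case y_less: False
    show ?thesis
    proof (cases "y \<le> ?m")
      case True
      then have "Q y - {?m} = Q y"
        by (auto simp: Q_def)
      moreover have "card (P y) \<le> card {s' \<in> insert s S. a < s' \<and> s' \<le> y}"
        using assms(1) by (intro card_mono) (auto simp: P_def)
      ultimately show ?thesis
        using hall[of y] by simp
    next
      case False
      then have "Q y = Q s"
        using y_less Max_less_ge[OF ne] by (fastforce simp: Q_def)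
      moreover have "card (P y) \<le> card (P s)"
        using assms(1) y_less by (intro card_mono) (auto simp: P_def)
      ultimately show ?thesis
        using P_less_Q[of s] m finite_Q[of s] by simp
    qed
  qed
  moreover have "{t \<in> R - {?m}. a \<le> t \<and> t < y} = Q y - {?m}" for y
    by (auto simp: Q_def)
  ultimately show ?thesis
    unfolding hall_above_def P_def by simp
qed

lemma notin_pick_aux:
  assumes "sorted_wrt (>) ss" "x + 1 \<notin> set ss" "hall_above (x + 1) (set ss) R"
  shows "x \<notin> pick_aux ss R"
  using assms
proof (induction ss arbitrary: R)
  case (Cons s ss)
  show ?case
  proof (cases "s \<le> x")
    case True
    then have "\<forall>s' \<in> set (s # ss). s' \<le> x"
      using Cons.prems(1) by auto
    then show ?thesis
      using pick_aux_less[of x "s # ss" R] by fastforce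
  next
    case False
    with Cons.prems(2) have "x + 1 < s"
      by auto
    let ?m = "Max {t \<in> R. t < s}"
    have ne: "{t \<in> R. t < s} \<noteq> {}" and "x + 1 \<le> ?m"
      using hall_above_Max_less_ge[of "set ss" "x + 1" s R] \<open>x + 1 < s\<close> Cons.prems(3) by auto
    have "hall_above (x + 1) (set ss) (R - {?m})"
      using hall_above_remove_Max[of "set ss" s "x + 1" R] \<open>x + 1 < s\<close> Cons.prems by auto
    then have "x \<notin> pick_aux ss (R - {?m})"
      using Cons.IH Cons.prems by auto
    with \<open>x + 1 \<le> ?m\<close> show ?thesis
      unfolding pick_aux_Cons_Max[OF ne] by simp
  qed
qed simp

theorem corollary4p13:
  fixes S T :: "nat set" and x :: nat
  assumes "finite S" and "finite T"
    and "\<forall>s\<in>S. 0 < s" and "\<forall>t\<in>T. 0 < t"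
    and "x \<in> T"
    and "dominated {t\<in>T. t \<ge> x + 1} {s\<in>S. s > x + 1}"
    and "x + 1 \<notin> S"
  shows "x \<notin> tri T S"
proof -
  let ?ss = "rev (sorted_list_of_set S)"
  have "sorted_wrt (>) ?ss"
    by (simp add: sorted_wrt_rev)
  moreover have "set ?ss = S"
    using assms(1) by simp
  moreover have "hall_above (x + 1) S T"
    using assms(1,2,6) by (rule dominated_imp_hall_above)
  ultimately show ?thesis
    unfolding tri_def using notin_pick_aux assms(7) by metis
qed

end
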